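(* Consider the planted $k$-factor model with $k$ fixed and $p=\lambda/n$, where $\lambda=\lambda_n$ may depend on $n$, and condition on any realization of $H^*$. (i) If $\lambda=o(1)$, then with probability $1-o(1)$ the planted graph $H^*$ is the unique $k$-factor contained in $G$. (ii) If $\lambda=\Omega(1)$ (i.e. $\lambda_n\ge c_0>0$ for all large $n$), then there is a constant $c>0$ such that for all large $n$, with probability at least $c$ the graph $G$ contains a $k$-factor $H\neq H^*$.
   Context: Planted $k$-factor model: fix an integer $k\ge1$ and $n$ with $kn$ even. A $k$-factor on $[n]$ is a $k$-regular simple graph with vertex set $[n]$, identified with its edge set; $\mathcal H$ is the set of all $k$-factors on $[n]$. Let $p=\lambda/n\in[0,1]$. Draw $H^*$ uniformly at random from $\mathcal H$ and, independently, $G_0\sim\mathcal G(n,p)$ (each of the $\binom n2$ vertex pairs is an edge independently with probability $p$). The observed graph is $G=G_0\cup H^*$ (union of edge sets). A $k$-factor $H$ is "contained in $G$" if $H\subseteq E(G)$. Asymptotics are as $n\to\infty$ with $k$ fixed. *)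

theory Defs
  imports Complex_Main
begin

text \<open>Vertex set [n] is rendered as {0..<n}; an edge is a 2-element set {u,v}.
A graph on [n] is identified with its edge set.\<close>

definition vpairs :: "nat \<Rightarrow> nat set set" where
  "vpairs n = {e. \<exists>u v. u < n \<and> v < n \<and> u \<noteq> v \<and> e = {u, v}}"

definition is_kfactor :: "nat \<Rightarrow> nat \<Rightarrow> nat set set \<Rightarrow> bool" where
  "is_kfactor n k H \<longleftrightarrow> H \<subseteq> vpairs n \<and> (\<forall>v<n. card {e \<in> H. v \<in> e} = k)"

definition gnp_prob :: "nat \<Rightarrow> real \<Rightarrow> (nat set set \<Rightarrow> bool) \<Rightarrow> real" where
  "gnp_prob n p Q = (\<Sum>S\<in>Pow (vpairs n).
      if Q S then p ^ card S * (1 - p) ^ (card (vpairs n) - card S) else 0)"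

text \<open>Given the planted k-factor H, the probability (over G0 ~ G(n,p)) that
G = G0 \<union> H contains a k-factor different from H.\<close>
definition other_factor_prob :: "nat \<Rightarrow> nat \<Rightarrow> real \<Rightarrow> nat set set \<Rightarrow> real" where
  "other_factor_prob n k p H =
     gnp_prob n p (\<lambda>G0. \<exists>H'. is_kfactor n k H' \<and> H' \<noteq> H \<and> H' \<subseteq> G0 \<union> H)"

end

theory Submission
  imports Defs "HOL-Library.FuncSet"
begin

(* (i) If G contains a k-factor H' different from H, then H' - H and H - H' have equal degrees at
   every vertex, so they contain an alternating cycle. Its m edges from H' - H lie in G0, are
   distinct, and are determined by the m oriented H-edges of the cycle; there are at most (kn)^m
   such descriptions, each present with probability p^m, so the failure probability is at most
   the sum over m of (k lam)^m, which is O(lam).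
   (ii) Greedily choose about n / (k+1)^3 vertices at pairwise distance more than 3 in H. For two
   of them, x and y, with H-neighbours x' and y', replacing xx', yy' by xy, x'y' gives another
   k-factor. These Omega(n^2) switchings need pairwise disjoint pairs of new edges, each present with
   probability p^2, and the second Bonferroni inequality on a subfamily of size about
   min(n^2, 1/p^2) bounds the probability from below by a constant times min(lam^2, 1). *)

section \<open>Subgraph events in G(n,p)\<close>

lemma finite_vpairs: "finite (vpairs n)"
proof -
  have "vpairs n \<subseteq> (\<lambda>(u, v). {u, v}) ` ({..<n} \<times> {..<n})"
    unfolding vpairs_def by auto
  then show ?thesis
    by (rule finite_subset) auto
qed

lemma vpairsE:
  assumes "e \<in> vpairs n"
  obtains a b where "a \<noteq> b" "a < n" "b < n" "e = {a, b}"
  using assms unfolding vpairs_def by blast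

lemma sum_Pow_power_binomial:
  fixes p q :: "'a :: comm_semiring_1"
  assumes "finite B"
  shows "(\<Sum>T\<in>Pow B. p ^ card T * q ^ (card B - card T)) = (p + q) ^ card B"
proof -
  have "(p + q) ^ card B = (\<Sum>T\<in>Pow B. (\<Prod>x\<in>T. p) * (\<Prod>x\<in>B - T. q))"
    using prod_add[OF assms, of "\<lambda>_. p" "\<lambda>_. q"] by simp
  also have "\<dots> = (\<Sum>T\<in>Pow B. p ^ card T * q ^ (card B - card T))"
    using assms by (intro sum.cong) (auto simp: card_Diff_subset finite_subset)
  finally show ?thesis ..
qed

definition gnp_weight :: "nat \<Rightarrow> real \<Rightarrow> nat set set \<Rightarrow> real" where
  "gnp_weight n p S = p ^ card S * (1 - p) ^ (card (vpairs n) - card S)"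

definition gnp_expect :: "nat \<Rightarrow> real \<Rightarrow> (nat set set \<Rightarrow> real) \<Rightarrow> real" where
  "gnp_expect n p X = (\<Sum>S\<in>Pow (vpairs n). gnp_weight n p S * X S)"

lemma gnp_prob_eq_expect: "gnp_prob n p Q = gnp_expect n p (\<lambda>S. if Q S then 1 else 0)"
  unfolding gnp_prob_def gnp_expect_def gnp_weight_def by (rule sum.cong) auto

lemma gnp_expect_mono:
  assumes "0 \<le> p" "p \<le> 1" "\<And>S. X S \<le> Y S"
  shows "gnp_expect n p X \<le> gnp_expect n p Y"
  unfolding gnp_expect_def gnp_weight_def using assms by (intro sum_mono mult_left_mono) auto

lemma gnp_expect_sum: "gnp_expect n p (\<lambda>S. \<Sum>i\<in>I. X i S) = (\<Sum>i\<in>I. gnp_expect n p (X i))"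
  unfolding gnp_expect_def by (simp add: sum_distrib_left sum.swap[of _ I])

lemma gnp_expect_diff: "gnp_expect n p (\<lambda>S. X S - Y S) = gnp_expect n p X - gnp_expect n p Y"
  unfolding gnp_expect_def by (simp add: algebra_simps sum_subtractf)

lemma gnp_expect_divide: "gnp_expect n p (\<lambda>S. X S / c) = gnp_expect n p X / c"
  unfolding gnp_expect_def by (simp add: sum_divide_distrib)

lemma gnp_prob_mono:
  assumes "0 \<le> p" "p \<le> 1" "\<And>S. Q S \<Longrightarrow> Q' S"
  shows "gnp_prob n p Q \<le> gnp_prob n p Q'"
  unfolding gnp_prob_eq_expect using assms by (intro gnp_expect_mono) auto

lemma gnp_prob_contains:
  assumes A: "A \<subseteq> vpairs n"
  shows "gnp_prob n p (\<lambda>S. A \<subseteq> S) = p ^ card A"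
proof -
  let ?V = "vpairs n"
  have finA: "finite A"
    using A finite_vpairs by (rule finite_subset)
  have cardV: "card ?V = card A + card (?V - A)"
    using A finA by (simp add: card_Diff_subset card_mono[OF finite_vpairs])
  have "gnp_prob n p (\<lambda>S. A \<subseteq> S) = (\<Sum>S\<in>{S \<in> Pow ?V. A \<subseteq> S}. gnp_weight n p S)"
    unfolding gnp_prob_def gnp_weight_def by (rule sum.inter_filter[symmetric]) (simp add: finite_vpairs)
  also have "{S \<in> Pow ?V. A \<subseteq> S} = (\<lambda>T. A \<union> T) ` Pow (?V - A)"
    using A by (auto intro!: image_eqI[of _ _ "_ - A"])
  also have "(\<Sum>S\<in>(\<lambda>T. A \<union> T) ` Pow (?V - A). gnp_weight n p S)
      = (\<Sum>T\<in>Pow (?V - A). gnp_weight n p (A \<union> T))"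
    by (rule sum.reindex[unfolded comp_def]) (auto simp: inj_on_def)
  also have "\<dots> = (\<Sum>T\<in>Pow (?V - A). p ^ card A * (p ^ card T * (1 - p) ^ (card (?V - A) - card T)))"
  proof (rule sum.cong)
    fix T assume T: "T \<in> Pow (?V - A)"
    then have "finite T"
      using finite_vpairs by (auto intro: finite_subset)
    then have "card (A \<union> T) = card A + card T"
      using T finA by (subst card_Un_disjoint) auto
    moreover have "card T \<le> card (?V - A)"
      using T finite_vpairs by (auto intro: card_mono)
    ultimately show "gnp_weight n p (A \<union> T) = p ^ card A * (p ^ card T * (1 - p) ^ (card (?V - A) - card T))"
      unfolding gnp_weight_def using cardV by (simp add: power_add)
  qed simp
  also have "\<dots> = p ^ card A"
    using sum_Pow_power_binomial[of "?V - A" p "1 - p"] finite_vpairs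
    by (simp add: sum_distrib_left[symmetric])
  finally show ?thesis .
qed

lemma gnp_prob_union_bound:
  assumes "finite I" "0 \<le> p" "p \<le> 1"
  shows "gnp_prob n p (\<lambda>S. \<exists>i\<in>I. Q i S) \<le> (\<Sum>i\<in>I. gnp_prob n p (Q i))"
proof -
  have "(if \<exists>i\<in>I. Q i S then 1 else 0) \<le> (\<Sum>i\<in>I. if Q i S then 1 else (0::real))" for S
  proof (cases "\<exists>i\<in>I. Q i S")
    case True
    then obtain i where "i \<in> I" "Q i S" by blast
    then show ?thesis
      using member_le_sum[of i I "\<lambda>i. if Q i S then 1 else (0::real)"] assms(1) by simp
  qed (simp add: sum_nonneg)
  then have "gnp_prob n p (\<lambda>S. \<exists>i\<in>I. Q i S) \<le> gnp_expect n p (\<lambda>S. \<Sum>i\<in>I. if Q i S then 1 else 0)"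
    unfolding gnp_prob_eq_expect using assms by (intro gnp_expect_mono)
  then show ?thesis
    by (simp add: gnp_expect_sum gnp_prob_eq_expect)
qed

lemma card_off_diagonal:
  assumes "finite J"
  shows "card (J \<times> J - (\<lambda>i. (i, i)) ` J) = card J * card J - card J"
proof -
  have "card ((\<lambda>i. (i, i)) ` J) = card J"
    by (rule card_image) (auto simp: inj_on_def)
  then show ?thesis
    using assms by (subst card_Diff_subset) (auto simp: card_cartesian_product)
qed

lemma bonferroni_count:
  "real j - (real j * real j - real j) / 2 \<le> (if j = 0 then 0 else 1)"
proof (cases "j \<le> 1")
  case False
  then have "0 \<le> (real j - 1) * (real j - 2)"
    by (intro mult_nonneg_nonneg) auto
  then show ?thesis
    using False by (simp add: field_simps)
next
  case True
  then have "j = 0 \<or> j = 1"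
    by auto
  then show ?thesis
    by auto
qed

lemma gnp_prob_ex_disjoint_ge:
  assumes I: "finite I" and p: "0 \<le> p" "p \<le> 1"
    and A: "\<And>i. i \<in> I \<Longrightarrow> A i \<subseteq> vpairs n \<and> card (A i) = s"
    and disj: "\<And>i j. i \<in> I \<Longrightarrow> j \<in> I \<Longrightarrow> i \<noteq> j \<Longrightarrow> A i \<inter> A j = {}"
  shows "real (card I) * p ^ s - (real (card I) * real (card I) - real (card I)) * p ^ (2 * s) / 2
      \<le> gnp_prob n p (\<lambda>S. \<exists>i\<in>I. A i \<subseteq> S)"
proof -
  define Off where "Off = I \<times> I - (\<lambda>i. (i, i)) ` I"
  define X where "X S = (\<Sum>i\<in>I. if A i \<subseteq> S then 1 else 0)
      - (\<Sum>q\<in>Off. if A (fst q) \<union> A (snd q) \<subseteq> S then 1 else 0) / (2::real)" for S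
  have count_le: "X S \<le> (if \<exists>i\<in>I. A i \<subseteq> S then 1 else 0)" for S
  proof -
    define J where "J = {i \<in> I. A i \<subseteq> S}"
    have "{q \<in> Off. A (fst q) \<union> A (snd q) \<subseteq> S} = J \<times> J - (\<lambda>i. (i, i)) ` J"
      unfolding Off_def J_def by auto
    then have "X S = real (card J) - (real (card J) * real (card J) - real (card J)) / 2"
      unfolding X_def using I
      by (simp add: sum.inter_filter[symmetric] J_def Off_def card_off_diagonal le_square)
    also have "\<dots> \<le> (if card J = 0 then 0 else 1)"
      by (rule bonferroni_count)
    also have "\<dots> = (if \<exists>i\<in>I. A i \<subseteq> S then 1 else 0)"
      using I by (auto simp: J_def)
    finally show ?thesis .
  qed
  have pair: "gnp_prob n p (\<lambda>S. A (fst q) \<union> A (snd q) \<subseteq> S) = p ^ (2 * s)" if "q \<in> Off" for q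
  proof -
    have "fst q \<in> I" "snd q \<in> I" "fst q \<noteq> snd q"
      using that by (auto simp: Off_def)
    moreover from this have "finite (A (fst q))" "finite (A (snd q))"
      using A finite_vpairs by (meson finite_subset)+
    ultimately show ?thesis
      using A disj by (subst gnp_prob_contains) (auto simp: card_Un_disjoint mult_2)
  qed
  have card_Off: "real (card Off) = real (card I) * real (card I) - real (card I)"
    using I by (simp add: Off_def card_off_diagonal le_square)
  have "real (card I) * p ^ s - (real (card I) * real (card I) - real (card I)) * p ^ (2 * s) / 2
      = gnp_expect n p X"
    unfolding X_def gnp_expect_diff gnp_expect_divide gnp_expect_sum
      gnp_prob_eq_expect[symmetric] using A pair card_Off by (simp add: gnp_prob_contains)
  also have "\<dots> \<le> gnp_prob n p (\<lambda>S. \<exists>i\<in>I. A i \<subseteq> S)"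
    unfolding gnp_prob_eq_expect by (intro gnp_expect_mono p count_le)
  finally show ?thesis .
qed

lemma floor_ge_half:
  assumes "1 \<le> y"
  shows "y / 2 \<le> real (nat \<lfloor>y\<rfloor>)"
proof -
  have "y - 1 < real_of_int \<lfloor>y\<rfloor>" "1 \<le> \<lfloor>y\<rfloor>"
    using assms by linarith+
  then show ?thesis
    by linarith
qed

text \<open>Taking about \<open>min M (1 / q)\<close> of \<open>M\<close> events of probability \<open>q\<close> keeps the second
  Bonferroni term below half of the first.\<close>
lemma bonferroni_truncation:
  fixes q :: real
  assumes q: "0 < q" "q \<le> 1"
  obtains N where "N \<le> M"
    "min (real M * q) (1 / 2) / 2 \<le> real N * q - (real N * real N - real N) * q ^ 2 / 2"
proof -
  define N where "N = min M (nat \<lfloor>1 / q\<rfloor>)"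
  define t where "t = real N * q"
  have inv_q: "1 \<le> 1 / q"
    using q by simp
  have "real N \<le> real (nat \<lfloor>1 / q\<rfloor>)"
    by (simp add: N_def)
  also have "\<dots> \<le> 1 / q"
    using inv_q by linarith
  finally have t_le: "t \<le> 1"
    using q by (simp add: t_def field_simps)
  have t_ge: "min (real M * q) (1 / 2) \<le> t"
  proof (cases "M \<le> nat \<lfloor>1 / q\<rfloor>")
    case False
    then have "N = nat \<lfloor>1 / q\<rfloor>"
      by (simp add: N_def)
    moreover have "1 / q / 2 \<le> real (nat \<lfloor>1 / q\<rfloor>)"
      using inv_q by (rule floor_ge_half)
    ultimately have "1 / 2 \<le> t"
      using q by (simp add: t_def field_simps)
    then show ?thesis
      by simp
  qed (simp add: t_def N_def)
  have "0 \<le> t * (1 - t)"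
    using t_le q by (simp add: t_def)
  then have "min (real M * q) (1 / 2) / 2 \<le> t - t ^ 2 / 2"
    using t_ge by (simp add: power2_eq_square algebra_simps)
  also have "\<dots> \<le> real N * q - (real N * real N - real N) * q ^ 2 / 2"
    using q by (simp add: t_def power2_eq_square algebra_simps)
  finally show ?thesis
    by (rule that[rotated]) (simp add: N_def)
qed

lemma gnp_prob_ex_disjoint_ge_min:
  assumes P: "finite P" and p: "0 < p" "p \<le> 1"
    and A: "\<And>i. i \<in> P \<Longrightarrow> A i \<subseteq> vpairs n \<and> card (A i) = s"
    and disj: "\<And>i j. i \<in> P \<Longrightarrow> j \<in> P \<Longrightarrow> i \<noteq> j \<Longrightarrow> A i \<inter> A j = {}"
  shows "min (real (card P) * p ^ s) (1 / 2) / 2 \<le> gnp_prob n p (\<lambda>S. \<exists>i\<in>P. A i \<subseteq> S)"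
proof -
  have "0 < p ^ s" "p ^ s \<le> 1"
    using p by (auto simp: power_le_one)
  then obtain N where N: "N \<le> card P" "min (real (card P) * p ^ s) (1 / 2) / 2
      \<le> real N * p ^ s - (real N * real N - real N) * (p ^ s) ^ 2 / 2"
    by (rule bonferroni_truncation)
  obtain I where I: "I \<subseteq> P" "card I = N"
    using obtain_subset_with_card_n[OF N(1)] by blast
  have "min (real (card P) * p ^ s) (1 / 2) / 2
      \<le> real (card I) * p ^ s - (real (card I) * real (card I) - real (card I)) * p ^ (2 * s) / 2"
    using N(2) by (simp add: I(2) mult.commute[of 2 s] power_mult)
  also have "\<dots> \<le> gnp_prob n p (\<lambda>S. \<exists>i\<in>I. A i \<subseteq> S)"
    using I(1) P p A disj by (intro gnp_prob_ex_disjoint_ge) (auto intro: finite_subset simp: subset_iff)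
  also have "\<dots> \<le> gnp_prob n p (\<lambda>S. \<exists>i\<in>P. A i \<subseteq> S)"
    using I(1) p by (intro gnp_prob_mono) auto
  finally show ?thesis .
qed

section \<open>k-factors and switchings\<close>

lemma kfactor_finite: "is_kfactor n k H \<Longrightarrow> finite H"
  unfolding is_kfactor_def using finite_vpairs finite_subset by blast

lemma kfactor_edgeE:
  assumes "is_kfactor n k H" "e \<in> H"
  obtains a b where "a \<noteq> b" "a < n" "b < n" "e = {a, b}"
  using assms unfolding is_kfactor_def by (blast elim: vpairsE)

lemma kfactor_edge_vertices:
  "is_kfactor n k H \<Longrightarrow> {a, b} \<in> H \<Longrightarrow> a \<noteq> b \<and> a < n \<and> b < n"
  by (auto simp: doubleton_eq_iff elim: kfactor_edgeE)

lemma kfactor_degree_eq: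
  assumes "is_kfactor n k H" "is_kfactor n k H'"
  shows "card {e \<in> H'. v \<in> e} = card {e \<in> H. v \<in> e}"
proof (cases "v < n")
  case False
  have "v \<notin> e" if G: "is_kfactor n k G" and e: "e \<in> G" for G e
  proof -
    obtain a b where "a < n" "b < n" "e = {a, b}"
      using kfactor_edgeE[OF G e] by metis
    then show ?thesis
      using False by auto
  qed
  then have "{e \<in> H'. v \<in> e} = {}" "{e \<in> H. v \<in> e} = {}"
    using assms by blast+
  then show ?thesis
    by (simp only:)
qed (use assms in \<open>simp add: is_kfactor_def\<close>)

lemma kfactor_subset_eq:
  assumes "is_kfactor n k H" "is_kfactor n k H'" "H' \<subseteq> H"
  shows "H' = H"
proof (rule ccontr)
  assume "H' \<noteq> H"
  then obtain e where e: "e \<in> H" "e \<notin> H'"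
    using assms(3) by blast
  then obtain a b where "e = {a, b}"
    using assms(1) by (auto elim: kfactor_edgeE)
  then have "{x \<in> H'. a \<in> x} \<subset> {x \<in> H. a \<in> x}"
    using e assms(3) by auto
  then have "card {x \<in> H'. a \<in> x} < card {x \<in> H. a \<in> x}"
    using kfactor_finite[OF assms(1)] by (intro psubset_card_mono) auto
  then show False
    using kfactor_degree_eq[OF assms(1,2)] by simp
qed

lemma card_incident_split:
  assumes "finite G"
  shows "card {e \<in> G. v \<in> e} = card {e \<in> G - G'. v \<in> e} + card {e \<in> G \<inter> G'. v \<in> e}"
proof -
  have "{e \<in> G. v \<in> e} = {e \<in> G - G'. v \<in> e} \<union> {e \<in> G \<inter> G'. v \<in> e}"
    by auto
  also have "card \<dots> = card {e \<in> G - G'. v \<in> e} + card {e \<in> G \<inter> G'. v \<in> e}"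
    using assms by (intro card_Un_disjoint) auto
  finally show ?thesis .
qed

lemma kfactor_diff_degree_eq:
  assumes "is_kfactor n k H" "is_kfactor n k H'"
  shows "card {e \<in> H' - H. v \<in> e} = card {e \<in> H - H'. v \<in> e}"
  using card_incident_split[of H' v H] card_incident_split[of H v H'] kfactor_degree_eq[OF assms]
    assms kfactor_finite by (simp add: Int_commute)

definition nbrs :: "'a set set \<Rightarrow> 'a \<Rightarrow> 'a set" where
  "nbrs H a = {b. {a, b} \<in> H}"

lemma kfactor_incident_eq_image:
  assumes H: "is_kfactor n k H"
  shows "{e \<in> H. a \<in> e} = (\<lambda>b. {a, b}) ` nbrs H a"
proof (intro equalityI subsetI)
  fix e assume e: "e \<in> {e \<in> H. a \<in> e}"
  then obtain u v where "e = {u, v}"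
    using H by (blast elim: kfactor_edgeE)
  then show "e \<in> (\<lambda>b. {a, b}) ` nbrs H a"
    using e by (auto simp: nbrs_def insert_commute)
qed (auto simp: nbrs_def)

lemma kfactor_nbrs:
  assumes H: "is_kfactor n k H"
  shows "finite (nbrs H a)" and "card (nbrs H a) \<le> k" and "a < n \<Longrightarrow> card (nbrs H a) = k"
proof -
  have "nbrs H a \<subseteq> {..<n}"
    using H by (auto simp: nbrs_def dest: kfactor_edge_vertices)
  then show "finite (nbrs H a)"
    by (rule finite_subset) simp
  have degree: "card (nbrs H a) = card {e \<in> H. a \<in> e}"
    unfolding kfactor_incident_eq_image[OF H]
    by (rule card_image[symmetric]) (auto simp: inj_on_def doubleton_eq_iff)
  show "a < n \<Longrightarrow> card (nbrs H a) = k"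
    using H degree by (simp add: is_kfactor_def)
  show "card (nbrs H a) \<le> k"
  proof (cases "a < n")
    case False
    then have "nbrs H a = {}"
      using H by (auto simp: nbrs_def dest: kfactor_edge_vertices)
    then show ?thesis
      by simp
  qed (use H degree in \<open>simp add: is_kfactor_def\<close>)
qed

definition darts :: "'a set set \<Rightarrow> ('a \<times> 'a) set" where
  "darts H = {(a, b). {a, b} \<in> H}"

lemma kfactor_darts:
  assumes H: "is_kfactor n k H"
  shows "finite (darts H)" and "card (darts H) = n * k"
proof -
  have darts_eq: "darts H = Sigma {..<n} (nbrs H)"
    using kfactor_edge_vertices[OF H] by (auto simp: darts_def nbrs_def)
  then show "finite (darts H)"
    using kfactor_nbrs(1)[OF H] by auto
  have "card (Sigma {..<n} (nbrs H)) = (\<Sum>a<n. card (nbrs H a))"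
    using kfactor_nbrs(1)[OF H] by (intro card_SigmaI) auto
  also have "\<dots> = n * k"
    using kfactor_nbrs(3)[OF H] by simp
  finally show "card (darts H) = n * k"
    unfolding darts_eq .
qed

lemma card_incident_after_switch:
  assumes fin: "finite H" and ab: "{a, b} \<in> H" and cd: "{c, d} \<in> H"
    and dist: "a \<noteq> b" "a \<noteq> c" "a \<noteq> d" and ac: "{a, c} \<notin> H"
  shows "card {e \<in> H - {{a, b}, {c, d}} \<union> {{a, c}, {b, d}}. a \<in> e} = card {e \<in> H. a \<in> e}"
proof -
  have "{e \<in> H - {{a, b}, {c, d}} \<union> {{a, c}, {b, d}}. a \<in> e} = insert {a, c} ({e \<in> H. a \<in> e} - {{a, b}})"
    using dist by auto
  moreover have "{a, c} \<notin> {e \<in> H. a \<in> e} - {{a, b}}"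
    using ac by simp
  moreover have "0 < card {e \<in> H. a \<in> e}"
    using fin ab by (auto simp: card_gt_0_iff)
  ultimately show ?thesis
    using fin ab by (simp add: card_Diff_singleton)
qed

lemma switch_kfactor:
  assumes H: "is_kfactor n k H" and ab: "{a, b} \<in> H" and cd: "{c, d} \<in> H"
    and dist: "a \<noteq> c" "a \<noteq> d" "b \<noteq> c" "b \<noteq> d"
    and ac: "{a, c} \<notin> H" and bd: "{b, d} \<notin> H"
  shows "is_kfactor n k (H - {{a, b}, {c, d}} \<union> {{a, c}, {b, d}})"
proof -
  let ?H' = "H - {{a, b}, {c, d}} \<union> {{a, c}, {b, d}}"
  have fin: "finite H"
    using H by (rule kfactor_finite)
  have "a \<noteq> b" "c \<noteq> d" "a < n" "b < n" "c < n" "d < n"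
    using H ab cd by (auto dest: kfactor_edge_vertices)
  note dist = dist this
  have "{a, c} \<in> vpairs n" "{b, d} \<in> vpairs n"
    using dist unfolding vpairs_def by blast+
  then have sub: "?H' \<subseteq> vpairs n"
    using H by (auto simp: is_kfactor_def)
  have "card {e \<in> ?H'. v \<in> e} = card {e \<in> H. v \<in> e}" for v
  proof -
    consider "v = a" | "v = b" | "v = c" | "v = d" | "v \<notin> {a, b, c, d}"
      by blast
    then show ?thesis
    proof cases
      case 1
      then show ?thesis
        using card_incident_after_switch[OF fin ab cd] dist ac by simp
    next
      case 2
      then show ?thesis
        using card_incident_after_switch[OF fin, of b a d c] ab cd dist bd
        by (simp add: insert_commute)
    next
      case 3
      then show ?thesis
        using card_incident_after_switch[OF fin, of c d a b] ab cd dist ac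
        by (simp add: insert_commute)
    next
      case 4
      then show ?thesis
        using card_incident_after_switch[OF fin, of d c b a] ab cd dist bd
        by (simp add: insert_commute)
    next
      case 5
      then have "{e \<in> ?H'. v \<in> e} = {e \<in> H. v \<in> e}"
        by auto
      then show ?thesis
        by simp
    qed
  qed
  then show ?thesis
    using H sub by (simp add: is_kfactor_def)
qed

section \<open>Alternating cycles\<close>

definition other_end :: "'a set \<Rightarrow> 'a \<Rightarrow> 'a" where
  "other_end e a = the_elem (e - {a})"

lemma other_end_doubleton:
  assumes "a \<noteq> b" "w \<in> {a, b}"
  shows "{a, b} = {w, other_end {a, b} w}" and "other_end {a, b} w \<noteq> w"
proof -
  have "{a, b} - {w} = {if w = a then b else a}"
    using assms by auto
  then show "{a, b} = {w, other_end {a, b} w}" "other_end {a, b} w \<noteq> w"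
    using assms by (auto simp: other_end_def)
qed

lemma funpow_in_closed: "f ` A \<subseteq> A \<Longrightarrow> x \<in> A \<Longrightarrow> (f ^^ i) x \<in> A"
  by (induction i) auto

lemma funpow_cancel_inj_on:
  assumes "f ` A \<subseteq> A" "inj_on f A" "x \<in> A" "(f ^^ i) x = (f ^^ (i + m)) x"
  shows "(f ^^ m) x = x"
  using assms(4)
proof (induction i)
  case (Suc i)
  then have "f ((f ^^ i) x) = f ((f ^^ (i + m)) x)"
    by simp
  then have "(f ^^ i) x = (f ^^ (i + m)) x"
    using inj_onD[OF assms(2)] funpow_in_closed[OF assms(1,3)] by blast
  then show ?case
    by (rule Suc.IH)
qed simp

lemma funpow_returns_inj_on:
  assumes fin: "finite A" and f: "f ` A \<subseteq> A" "inj_on f A" and x: "x \<in> A"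
  obtains n where "0 < n" "(f ^^ n) x = x"
proof -
  have into: "(\<lambda>i. (f ^^ i) x) ` {..card A} \<subseteq> A"
    using funpow_in_closed[OF f(1) x] by auto
  have "\<not> inj_on (\<lambda>i. (f ^^ i) x) {..card A}"
  proof
    assume "inj_on (\<lambda>i. (f ^^ i) x) {..card A}"
    from card_inj_on_le[OF this into fin] show False
      by simp
  qed
  then obtain i j where "i < j" "(f ^^ i) x = (f ^^ j) x"
    unfolding inj_on_def by (metis nat_neq_iff)
  then have "(f ^^ (j - i)) x = x"
    by (intro funpow_cancel_inj_on[OF f x, of i]) simp
  then show ?thesis
    using \<open>i < j\<close> by (intro that) auto
qed

text \<open>A return to \<open>r s\<close> after \<open>d + 2\<close> steps from \<open>s\<close> gives one after \<open>d\<close> steps from \<open>f s\<close>,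
  by injectivity and \<open>f (r (f s)) = r s\<close>; so it reduces to the excluded cases \<open>d = 0\<close> and \<open>d = 1\<close>.\<close>
lemma funpow_ne_reverse:
  assumes f: "f ` A \<subseteq> A" "inj_on f A"
    and r: "\<And>s. s \<in> A \<Longrightarrow> r s \<in> A" "\<And>s. s \<in> A \<Longrightarrow> f (r (f s)) = r s"
    and ne: "\<And>s. s \<in> A \<Longrightarrow> s \<noteq> r s" "\<And>s. s \<in> A \<Longrightarrow> f s \<noteq> r s"
    and s: "s \<in> A"
  shows "(f ^^ d) s \<noteq> r s"
  using s
proof (induction d arbitrary: s rule: less_induct)
  case (less d)
  consider "d = 0" | "d = 1" | d' where "d = Suc (Suc d')"
    by (metis One_nat_def not0_implies_Suc)
  then show ?case
  proof cases
    case 3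
    show ?thesis
    proof
      assume "(f ^^ d) s = r s"
      have fs: "f s \<in> A"
        using f less.prems by blast
      have "f (r (f s)) = f ((f ^^ Suc d') s)"
        using \<open>(f ^^ d) s = r s\<close> r(2)[OF less.prems] 3 by simp
      then have "r (f s) = (f ^^ d') (f s)"
        using inj_onD[OF f(2)] r(1)[OF fs] funpow_in_closed[OF f(1) fs]
        by (simp add: funpow_Suc_right del: funpow.simps)
      then show False
        using less.IH[of d' "f s"] fs 3 by simp
    qed
  qed (use ne less.prems in auto)
qed

lemma darts_edge: "s \<in> darts E \<Longrightarrow> {fst s, snd s} \<in> E"
  by (auto simp: darts_def)

lemma darts_swap: "s \<in> darts E \<Longrightarrow> prod.swap s \<in> darts E"
  by (auto simp: darts_def insert_commute)

locale dart_pairing =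
  fixes D R :: "'a set set" and \<pi> :: "'a \<Rightarrow> 'a set \<Rightarrow> 'a set"
  assumes D_doubleton: "e \<in> D \<Longrightarrow> \<exists>a b. a \<noteq> b \<and> e = {a, b}"
    and R_doubleton: "e \<in> R \<Longrightarrow> \<exists>a b. a \<noteq> b \<and> e = {a, b}"
    and pairing: "bij_betw (\<pi> v) {e \<in> D. v \<in> e} {e \<in> R. v \<in> e}"
begin

text \<open>The dart \<open>(u, w)\<close> runs along the \<open>D\<close>-edge \<open>uw\<close>; at \<open>w\<close> it is paired with the \<open>R\<close>-edge
  \<open>wx\<close>, which at \<open>x\<close> is paired with the \<open>D\<close>-edge \<open>xy\<close>; the next dart is \<open>(x, y)\<close>.\<close>
definition next_dart :: "'a \<times> 'a \<Rightarrow> 'a \<times> 'a" where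
  "next_dart = (\<lambda>(u, w). let r = \<pi> w {u, w}; x = other_end r w;
                             e = inv_into {e \<in> D. x \<in> e} (\<pi> x) r
                         in (x, other_end e x))"

lemma D_dart_ne: "{u, w} \<in> D \<Longrightarrow> u \<noteq> w"
  using D_doubleton by (metis doubleton_eq_iff)

lemma next_dart_step:
  assumes uw: "{u, w} \<in> D"
  obtains x y where "next_dart (u, w) = (x, y)" "{x, y} \<in> D" "{w, x} \<in> R" "x \<noteq> w"
    "\<pi> w {u, w} = {w, x}" "\<pi> x {x, y} = {w, x}"
proof -
  define r where "r = \<pi> w {u, w}"
  define x where "x = other_end r w"
  have r: "r \<in> R" "w \<in> r"
    using uw pairing[of w] by (auto simp: r_def bij_betw_def)
  then obtain a b where "a \<noteq> b" "r = {a, b}"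
    using R_doubleton by blast
  then have rx: "r = {w, x}" "x \<noteq> w"
    using other_end_doubleton[of a b w] r(2) by (simp_all add: x_def)
  define e where "e = inv_into {e \<in> D. x \<in> e} (\<pi> x) r"
  define y where "y = other_end e x"
  have r_img: "r \<in> \<pi> x ` {e \<in> D. x \<in> e}"
    using r rx pairing[of x] by (auto simp: bij_betw_def)
  have e: "e \<in> D" "x \<in> e"
    using inv_into_into[OF r_img] by (simp_all add: e_def)
  have "\<pi> x e = r"
    unfolding e_def using r_img by (rule f_inv_into_f)
  obtain c d where "c \<noteq> d" "e = {c, d}"
    using D_doubleton e(1) by blast
  then have ey: "e = {x, y}"
    using other_end_doubleton(1)[of c d x] e(2) by (simp add: y_def)
  have "next_dart (u, w) = (x, y)"
    by (simp add: next_dart_def Let_def r_def x_def e_def y_def)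
  then show ?thesis
    using e(1) \<open>\<pi> x e = r\<close> r(1) rx ey by (intro that) (simp_all add: r_def)
qed

lemma next_dart_darts: "s \<in> darts D \<Longrightarrow> next_dart s \<in> darts D"
  by (cases s) (auto simp: darts_def elim: next_dart_step)

lemma next_dart_link: "s \<in> darts D \<Longrightarrow> {snd s, fst (next_dart s)} \<in> R"
  by (cases s) (auto simp: darts_def elim: next_dart_step)

lemma next_dart_ne_swap: "s \<in> darts D \<Longrightarrow> next_dart s \<noteq> prod.swap s"
  by (cases s) (auto simp: darts_def elim: next_dart_step)

lemma darts_ne_swap: "s \<in> darts D \<Longrightarrow> s \<noteq> prod.swap s"
  by (cases s) (auto simp: darts_def dest: D_dart_ne)

lemma inj_on_next_dart: "inj_on next_dart (darts D)"
proof (rule inj_onI)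
  fix s s' assume "s \<in> darts D" "s' \<in> darts D" and eq: "next_dart s = next_dart s'"
  then obtain u w u' w' where s: "s = (u, w)" "s' = (u', w')" "{u, w} \<in> D" "{u', w'} \<in> D"
    by (auto simp: darts_def)
  obtain x y where A: "next_dart (u, w) = (x, y)" "x \<noteq> w" "\<pi> w {u, w} = {w, x}" "\<pi> x {x, y} = {w, x}"
    using next_dart_step[OF s(3)] by metis
  obtain x' y' where B: "next_dart (u', w') = (x', y')" "x' \<noteq> w'" "\<pi> w' {u', w'} = {w', x'}"
      "\<pi> x' {x', y'} = {w', x'}"
    using next_dart_step[OF s(4)] by metis
  have xy: "x' = x" "y' = y"
    using A(1) B(1) eq s by auto
  then have "w' = w"
    using A(2,4) B(2,4) by (auto simp: doubleton_eq_iff)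
  then have "\<pi> w {u, w} = \<pi> w {u', w}" and "{u, w} \<in> {e \<in> D. w \<in> e}" "{u', w} \<in> {e \<in> D. w \<in> e}"
    using A(3) B(3) xy s by auto
  then have "{u, w} = {u', w}"
    using pairing[of w] by (auto simp: bij_betw_def inj_on_def)
  then show "s = s'"
    using s \<open>w' = w\<close> D_dart_ne by (auto simp: doubleton_eq_iff)
qed

lemma next_dart_swap:
  assumes "s \<in> darts D"
  shows "next_dart (prod.swap (next_dart s)) = prod.swap s"
proof -
  obtain u w where s: "s = (u, w)" "{u, w} \<in> D"
    using assms by (auto simp: darts_def)
  obtain x y where A: "next_dart (u, w) = (x, y)" "x \<noteq> w" "\<pi> w {u, w} = {w, x}" "\<pi> x {x, y} = {w, x}"
    using next_dart_step[OF s(2)] by metis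
  have "inv_into {e \<in> D. w \<in> e} (\<pi> w) {w, x} = {u, w}"
    using A(3) s(2) pairing[of w] by (metis (mono_tags, lifting) bij_betw_def inv_into_f_f insertCI mem_Collect_eq)
  moreover have "\<pi> x {y, x} = {w, x}" "other_end {w, x} x = w" "other_end {u, w} w = u"
    using A(2,4) other_end_doubleton[of x w x] other_end_doubleton[of u w w] D_dart_ne[OF s(2)]
    by (auto simp: insert_commute)
  ultimately have "next_dart (y, x) = (w, u)"
    by (simp add: next_dart_def Let_def insert_commute)
  then show ?thesis
    using A(1) s(1) by simp
qed

lemma closed_walk:
  assumes fin: "finite D" and ne: "D \<noteq> {}"
  obtains L s where "1 \<le> L" "s \<in> darts D" "(next_dart ^^ L) s = s"
    "inj_on (\<lambda>i. {fst ((next_dart ^^ i) s), snd ((next_dart ^^ i) s)}) {..<L}"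
proof -
  have "darts D \<subseteq> \<Union>D \<times> \<Union>D"
    by (auto simp: darts_def)
  moreover have "finite (\<Union>D)"
    using fin D_doubleton by auto
  ultimately have fin_darts: "finite (darts D)"
    using finite_subset by blast
  have closed: "next_dart ` darts D \<subseteq> darts D"
    using next_dart_darts by blast
  obtain a b where "{a, b} \<in> D"
    using ne D_doubleton by blast
  then have s: "(a, b) \<in> darts D"
    by (simp add: darts_def)
  define t where "t i = (next_dart ^^ i) (a, b)" for i
  have returns: "\<exists>n. 0 < n \<and> t n = t 0"
    using funpow_returns_inj_on[OF fin_darts closed inj_on_next_dart s] by (auto simp: t_def)
  define L where "L = (LEAST n. 0 < n \<and> t n = t 0)"
  have L: "0 < L" "t L = t 0"
    using LeastI_ex[OF returns] by (simp_all add: L_def)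
  have inj: "inj_on t {0..<L}"
    unfolding t_def
    by (rule inj_on_funpow_least) (use L not_less_Least in \<open>auto simp: L_def t_def\<close>)
  have t_darts: "t i \<in> darts D" for i
    unfolding t_def using funpow_in_closed[OF closed s] .
  have no_reversal: "t j \<noteq> prod.swap (t i)" if "i \<le> j" for i j
  proof -
    have "t j = (next_dart ^^ ((j - i) + i)) (a, b)"
      using that by (simp add: t_def)
    also have "\<dots> = (next_dart ^^ (j - i)) (t i)"
      by (simp add: t_def funpow_add)
    finally have "t j = (next_dart ^^ (j - i)) (t i)" .
    then show ?thesis
      using funpow_ne_reverse[OF closed inj_on_next_dart darts_swap next_dart_swap darts_ne_swap
          next_dart_ne_swap t_darts] by simp
  qed
  have "inj_on (\<lambda>i. {fst (t i), snd (t i)}) {..<L}"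
  proof (rule inj_onI)
    fix i j assume ij: "i \<in> {..<L}" "j \<in> {..<L}" and "{fst (t i), snd (t i)} = {fst (t j), snd (t j)}"
    then have "t i = t j \<or> t j = prod.swap (t i)"
      by (cases "t i"; cases "t j") (auto simp: doubleton_eq_iff)
    moreover have "t j \<noteq> prod.swap (t i)"
    proof (cases "i \<le> j")
      case False
      then have "t i \<noteq> prod.swap (t j)"
        by (intro no_reversal) simp
      then show ?thesis
        by auto
    qed (rule no_reversal)
    ultimately show "i = j"
      using inj_onD[OF inj] ij by auto
  qed
  then show ?thesis
    using that[of L "(a, b)"] L s by (simp add: t_def)
qed

end

definition link_edges :: "nat \<Rightarrow> (nat \<Rightarrow> 'a \<times> 'a) \<Rightarrow> 'a set set" where
  "link_edges L f = (\<lambda>i. {snd (f i), fst (f (Suc i mod L))}) ` {..<L}"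

lemma Suc_mod_image: "0 < L \<Longrightarrow> (\<lambda>i. Suc i mod L) ` {..<L} = {..<L}"
proof (intro equalityI subsetI)
  fix j assume "0 < L" "j \<in> {..<L}"
  then have "j = Suc (if j = 0 then L - 1 else j - 1) mod L" "(if j = 0 then L - 1 else j - 1) < L"
    by auto
  then show "j \<in> (\<lambda>i. Suc i mod L) ` {..<L}"
    by blast
qed auto

lemma link_edges_of_walk:
  assumes "0 < L" "\<And>i. t (i mod L) = t i"
  shows "link_edges L (\<lambda>i. if i < L then (snd (t i), fst (t (Suc i))) else undefined)
    = (\<lambda>i. {fst (t i), snd (t i)}) ` {..<L}"
proof -
  have "link_edges L (\<lambda>i. if i < L then (snd (t i), fst (t (Suc i))) else undefined)
      = (\<lambda>i. {fst (t i), snd (t i)}) ` (\<lambda>i. Suc i mod L) ` {..<L}"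
    unfolding link_edges_def image_image using assms
    by (intro image_cong) (auto simp: insert_commute)
  also have "\<dots> = (\<lambda>i. {fst (t i), snd (t i)}) ` {..<L}"
    using assms(1) by (simp add: Suc_mod_image)
  finally show ?thesis .
qed

text \<open>Equal degrees let every vertex pair its \<open>D\<close>-edges with its \<open>R\<close>-edges; following these pairings
  yields a closed walk alternating between \<open>D\<close> and \<open>R\<close>. It is recorded by its \<open>R\<close>-darts \<open>f i\<close>,
  whose \<open>D\<close>-edges are the links between consecutive darts.\<close>
lemma alternating_cycle_exists:
  fixes D R :: "'a set set"
  assumes fin: "finite D" "finite R"
    and D: "\<And>e. e \<in> D \<Longrightarrow> \<exists>a b. a \<noteq> b \<and> e = {a, b}"
    and R: "\<And>e. e \<in> R \<Longrightarrow> \<exists>a b. a \<noteq> b \<and> e = {a, b}"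
    and balanced: "\<And>v. card {e \<in> D. v \<in> e} = card {e \<in> R. v \<in> e}"
    and ne: "D \<noteq> {}"
  obtains L f where "1 \<le> L" "f \<in> {..<L} \<rightarrow>\<^sub>E darts R" "link_edges L f \<subseteq> D"
    "card (link_edges L f) = L"
proof -
  have "\<forall>v. \<exists>h. bij_betw h {e \<in> D. v \<in> e} {e \<in> R. v \<in> e}"
    using fin balanced by (intro allI finite_same_card_bij) auto
  then obtain \<pi> where "\<And>v. bij_betw (\<pi> v) {e \<in> D. v \<in> e} {e \<in> R. v \<in> e}"
    by metis
  then interpret dart_pairing D R \<pi>
    using D R by unfold_locales
  obtain L s where L: "1 \<le> L" "s \<in> darts D" "(next_dart ^^ L) s = s"
    and inj: "inj_on (\<lambda>i. {fst ((next_dart ^^ i) s), snd ((next_dart ^^ i) s)}) {..<L}"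
    using closed_walk[OF fin(1) ne] by blast
  define t where "t i = (next_dart ^^ i) s" for i
  define f where "f = (\<lambda>i. if i < L then (snd (t i), fst (t (Suc i))) else undefined)"
  have t_darts: "t i \<in> darts D" for i
    unfolding t_def using funpow_in_closed[of next_dart "darts D"] next_dart_darts L(2) by blast
  have links: "link_edges L f = (\<lambda>i. {fst (t i), snd (t i)}) ` {..<L}"
    unfolding f_def using L(1,3) by (intro link_edges_of_walk) (simp_all add: t_def funpow_mod_eq)
  show ?thesis
  proof (rule that)
    show "f \<in> {..<L} \<rightarrow>\<^sub>E darts R"
    proof (rule PiE_I)
      fix i assume "i \<in> {..<L}"
      then show "f i \<in> darts R"
        using next_dart_link[OF t_darts[of i]] by (simp add: f_def darts_def t_def)
    qed (simp add: f_def)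
    show "link_edges L f \<subseteq> D"
      using darts_edge[OF t_darts] by (auto simp: links)
    show "card (link_edges L f) = L"
      unfolding links using inj by (simp add: card_image t_def)
  qed (rule L(1))
qed

section \<open>Sparse regime\<close>

definition link_cycles :: "nat \<Rightarrow> nat set set \<Rightarrow> nat \<Rightarrow> (nat \<Rightarrow> nat \<times> nat) set" where
  "link_cycles n H m =
     {f \<in> {..<m} \<rightarrow>\<^sub>E darts H. link_edges m f \<subseteq> vpairs n \<and> card (link_edges m f) = m}"

lemma kfactor_link_cycles:
  assumes H: "is_kfactor n k H"
  shows "finite (link_cycles n H m)" and "card (link_cycles n H m) \<le> (n * k) ^ m"
proof -
  have sub: "link_cycles n H m \<subseteq> {..<m} \<rightarrow>\<^sub>E darts H"
    by (auto simp: link_cycles_def)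
  moreover have fin: "finite ({..<m} \<rightarrow>\<^sub>E darts H)"
    using kfactor_darts(1)[OF H] by (intro finite_PiE) auto
  ultimately show "finite (link_cycles n H m)"
    by (rule finite_subset)
  show "card (link_cycles n H m) \<le> (n * k) ^ m"
    using card_mono[OF fin sub] by (simp add: card_PiE kfactor_darts(2)[OF H])
qed

lemma other_kfactor_link_cycle:
  assumes H: "is_kfactor n k H" and H': "is_kfactor n k H'" "H' \<noteq> H"
  obtains m f where "m \<in> {1..card (vpairs n)}" "f \<in> link_cycles n H m" "link_edges m f \<subseteq> H' - H"
proof -
  have doubleton: "\<exists>a b. a \<noteq> b \<and> e = {a, b}" if "e \<in> H \<or> e \<in> H'" for e
    using that H H'(1) by (metis kfactor_edgeE)
  have "H' - H \<noteq> {}"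
    using kfactor_subset_eq[OF H H'(1)] H'(2) by blast
  then obtain L f where L: "1 \<le> L" "f \<in> {..<L} \<rightarrow>\<^sub>E darts (H - H')"
      "link_edges L f \<subseteq> H' - H" "card (link_edges L f) = L"
    using alternating_cycle_exists[of "H' - H" "H - H'"] kfactor_finite[OF H] kfactor_finite[OF H'(1)]
      doubleton kfactor_diff_degree_eq[OF H H'(1)] by blast
  have "link_edges L f \<subseteq> vpairs n"
    using L(3) H'(1) by (auto simp: is_kfactor_def)
  then have "L \<le> card (vpairs n)"
    using L(4) card_mono[OF finite_vpairs] by metis
  moreover have "darts (H - H') \<subseteq> darts H"
    by (auto simp: darts_def)
  then have "f \<in> {..<L} \<rightarrow>\<^sub>E darts H"
    using L(2) PiE_mono[of "{..<L}" "\<lambda>_. darts (H - H')" "\<lambda>_. darts H"] by blast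
  ultimately show ?thesis
    using that L \<open>link_edges L f \<subseteq> vpairs n\<close> by (simp add: link_cycles_def)
qed

lemma other_factor_prob_le_geometric:
  assumes H: "is_kfactor n k H" and p: "0 \<le> p" "p \<le> 1"
  shows "other_factor_prob n k p H \<le> (\<Sum>m=1..card (vpairs n). (real (n * k) * p) ^ m)"
proof -
  define M where "M = card (vpairs n)"
  have "other_factor_prob n k p H
      \<le> gnp_prob n p (\<lambda>S. \<exists>m\<in>{1..M}. \<exists>f\<in>link_cycles n H m. link_edges m f \<subseteq> S)"
    unfolding other_factor_prob_def
  proof (rule gnp_prob_mono[OF p])
    fix S assume "\<exists>H'. is_kfactor n k H' \<and> H' \<noteq> H \<and> H' \<subseteq> S \<union> H"
    then obtain H' where H': "is_kfactor n k H'" "H' \<noteq> H" "H' \<subseteq> S \<union> H"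
      by blast
    obtain m f where "m \<in> {1..M}" "f \<in> link_cycles n H m" "link_edges m f \<subseteq> H' - H"
      using other_kfactor_link_cycle[OF H H'(1,2)] unfolding M_def by blast
    moreover from this have "link_edges m f \<subseteq> S"
      using H'(3) by blast
    ultimately show "\<exists>m\<in>{1..M}. \<exists>f\<in>link_cycles n H m. link_edges m f \<subseteq> S"
      by blast
  qed
  also have "\<dots> \<le> (\<Sum>m=1..M. \<Sum>f\<in>link_cycles n H m. gnp_prob n p (\<lambda>S. link_edges m f \<subseteq> S))"
    using p kfactor_link_cycles(1)[OF H]
    by (intro order_trans[OF gnp_prob_union_bound] sum_mono gnp_prob_union_bound) auto
  also have "\<dots> = (\<Sum>m=1..M. real (card (link_cycles n H m)) * p ^ m)"
    by (intro sum.cong refl) (simp add: link_cycles_def gnp_prob_contains)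
  also have "\<dots> \<le> (\<Sum>m=1..M. real ((n * k) ^ m) * p ^ m)"
  proof -
    have "real (card (link_cycles n H m)) \<le> real ((n * k) ^ m)" for m
      using kfactor_link_cycles(2)[OF H] by (simp only: of_nat_le_iff)
    then show ?thesis
      using p by (intro sum_mono mult_right_mono) auto
  qed
  finally show ?thesis
    by (simp add: M_def power_mult_distrib)
qed

lemma sum_power_le_twice:
  fixes x :: real
  assumes "0 \<le> x" "x \<le> 1 / 2"
  shows "(\<Sum>m=1..M. x ^ m) \<le> 2 * x"
proof -
  have "(\<Sum>m=1..M. x ^ m) \<le> 2 * x - 2 * x ^ Suc M"
  proof (induction M)
    case (Suc M)
    have "0 \<le> x ^ Suc M * (1 - 2 * x)"
      using assms by simp
    then have "2 * x - 2 * x ^ Suc M + x ^ Suc M \<le> 2 * x - 2 * x ^ Suc (Suc M)"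
      by (simp add: algebra_simps)
    then show ?case
      using Suc by simp
  qed simp
  moreover have "0 \<le> x ^ Suc M"
    using assms by simp
  ultimately show ?thesis
    by linarith
qed

lemma other_factor_prob_tendsto_zero:
  assumes lim: "lam \<longlonglongrightarrow> 0" and lam: "\<And>n. 0 \<le> lam n \<and> lam n \<le> real n" and "0 < \<epsilon>"
  shows "\<exists>N. \<forall>n\<ge>N. \<forall>H. is_kfactor n k H \<longrightarrow> other_factor_prob n k (lam n / real n) H \<le> \<epsilon>"
proof -
  have "(\<lambda>n. real k * lam n) \<longlonglongrightarrow> 0"
    using tendsto_mult_left[OF lim, of "real k"] by simp
  moreover have "0 < min (1 / 2) (\<epsilon> / 2)"
    using \<open>0 < \<epsilon>\<close> by simp
  ultimately have "\<forall>\<^sub>F n in sequentially. real k * lam n < min (1 / 2) (\<epsilon> / 2)"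
    by (rule order_tendstoD(2))
  then obtain N where N: "\<And>n. N \<le> n \<Longrightarrow> real k * lam n < min (1 / 2) (\<epsilon> / 2)"
    unfolding eventually_sequentially by blast
  have "other_factor_prob n k (lam n / real n) H \<le> \<epsilon>" if "N \<le> n" "is_kfactor n k H" for n H
  proof -
    define x where "x = real (n * k) * (lam n / real n)"
    have "0 \<le> x" "x \<le> real k * lam n"
      using lam[of n] by (auto simp: x_def)
    then have x: "0 \<le> x" "x \<le> 1 / 2" "x \<le> \<epsilon> / 2"
      using N[OF that(1)] by auto
    have "lam n / real n \<le> 1"
      using lam[of n] by (cases "n = 0") auto
    then have "other_factor_prob n k (lam n / real n) H \<le> (\<Sum>m=1..card (vpairs n). x ^ m)"
      unfolding x_def using lam[of n] by (intro other_factor_prob_le_geometric that(2)) auto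
    also have "\<dots> \<le> 2 * x"
      using x by (intro sum_power_le_twice)
    finally show ?thesis
      using x by simp
  qed
  then show ?thesis
    by blast
qed

section \<open>Vertices far apart in a k-factor\<close>

definition cnbhd :: "'a set set \<Rightarrow> 'a set \<Rightarrow> 'a set" where
  "cnbhd H S = {y. \<exists>x\<in>S. x = y \<or> {x, y} \<in> H}"

definition ball3 :: "'a set set \<Rightarrow> 'a \<Rightarrow> 'a set" where
  "ball3 H x = cnbhd H (cnbhd H (cnbhd H {x}))"

lemma ball3_iff:
  "y \<in> ball3 H x \<longleftrightarrow> (\<exists>a b. (x = a \<or> {x, a} \<in> H) \<and> (a = b \<or> {a, b} \<in> H) \<and> (b = y \<or> {b, y} \<in> H))"
  by (auto simp: ball3_def cnbhd_def)

lemma self_in_ball3: "x \<in> ball3 H x"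
  by (auto simp: ball3_iff)

lemma ball3I:
  "{x, y} \<in> H \<Longrightarrow> y \<in> ball3 H x"
  "{x, a} \<in> H \<Longrightarrow> {a, y} \<in> H \<Longrightarrow> y \<in> ball3 H x"
  "{x, a} \<in> H \<Longrightarrow> {a, b} \<in> H \<Longrightarrow> {b, y} \<in> H \<Longrightarrow> y \<in> ball3 H x"
  unfolding ball3_iff by blast+

lemma ball3_sym:
  assumes "y \<in> ball3 H x"
  shows "x \<in> ball3 H y"
proof -
  obtain a b where "x = a \<or> {x, a} \<in> H" "a = b \<or> {a, b} \<in> H" "b = y \<or> {b, y} \<in> H"
    using assms unfolding ball3_iff by blast
  then have "(y = b \<or> {y, b} \<in> H) \<and> (b = a \<or> {b, a} \<in> H) \<and> (a = x \<or> {a, x} \<in> H)"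
    by (auto simp: insert_commute)
  then show ?thesis
    unfolding ball3_iff by blast
qed

lemma kfactor_cnbhd:
  assumes H: "is_kfactor n k H" and S: "finite S"
  shows "finite (cnbhd H S)" and "card (cnbhd H S) \<le> (k + 1) * card S"
proof -
  have eq: "cnbhd H S = S \<union> (\<Union>x\<in>S. nbrs H x)"
    by (auto simp: cnbhd_def nbrs_def)
  then show "finite (cnbhd H S)"
    using S kfactor_nbrs(1)[OF H] by simp
  have "card (cnbhd H S) \<le> card S + card (\<Union>x\<in>S. nbrs H x)"
    unfolding eq by (rule card_Un_le)
  also have "card (\<Union>x\<in>S. nbrs H x) \<le> (\<Sum>x\<in>S. card (nbrs H x))"
    using S by (rule card_UN_le)
  also have "\<dots> \<le> k * card S"
    using sum_mono[of S "\<lambda>x. card (nbrs H x)" "\<lambda>_. k"] kfactor_nbrs(2)[OF H] by (simp add: mult.commute)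
  finally show "card (cnbhd H S) \<le> (k + 1) * card S"
    by simp
qed

lemma kfactor_ball3:
  assumes H: "is_kfactor n k H"
  shows "finite (ball3 H x)" and "card (ball3 H x) \<le> (k + 1) ^ 3"
proof -
  define B1 where "B1 = cnbhd H {x}"
  define B2 where "B2 = cnbhd H B1"
  have B1: "finite B1" "card B1 \<le> k + 1"
    using kfactor_cnbhd[OF H, of "{x}"] by (simp_all add: B1_def)
  have B2: "finite B2"
    unfolding B2_def using H B1(1) by (rule kfactor_cnbhd(1))
  have "card B2 \<le> (k + 1) * card B1"
    unfolding B2_def using H B1(1) by (rule kfactor_cnbhd(2))
  also have "\<dots> \<le> (k + 1) * (k + 1)"
    using B1(2) by (rule mult_le_mono2)
  finally have card_B2: "card B2 \<le> (k + 1) * (k + 1)" .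
  show "finite (ball3 H x)"
    unfolding ball3_def B1_def[symmetric] B2_def[symmetric] using H B2 by (rule kfactor_cnbhd(1))
  have "card (ball3 H x) \<le> (k + 1) * card B2"
    unfolding ball3_def B1_def[symmetric] B2_def[symmetric] using H B2 by (rule kfactor_cnbhd(2))
  also have "\<dots> \<le> (k + 1) * ((k + 1) * (k + 1))"
    using card_B2 by (rule mult_le_mono2)
  also have "\<dots> = (k + 1) ^ 3"
    by (simp add: power3_eq_cube)
  finally show "card (ball3 H x) \<le> (k + 1) ^ 3" .
qed

lemma greedy_independent_subset:
  fixes C :: "'a \<Rightarrow> 'a set"
  assumes "finite X" and sym: "\<And>x y. y \<in> C x \<Longrightarrow> x \<in> C y" and self: "\<And>x. x \<in> C x"
    and "\<And>x. card (C x \<inter> X) \<le> d"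
  shows "\<exists>Y\<subseteq>X. card X \<le> d * card Y \<and> (\<forall>x\<in>Y. \<forall>y\<in>Y. x \<noteq> y \<longrightarrow> y \<notin> C x)"
  using assms(1,4)
proof (induction "card X" arbitrary: X rule: less_induct)
  case less
  show ?case
  proof (cases "X = {}")
    case False
    then obtain x where x: "x \<in> X"
      by blast
    define X' where "X' = X - C x"
    have fin: "finite X'"
      using less.prems(1) by (simp add: X'_def)
    have smaller: "card X' < card X"
      using less.prems(1) x self[of x] unfolding X'_def by (intro psubset_card_mono) auto
    have "card (C z \<inter> X') \<le> d" for z
    proof -
      have "card (C z \<inter> X') \<le> card (C z \<inter> X)"
        using less.prems(1) by (intro card_mono) (auto simp: X'_def)
      then show ?thesis
        using less.prems(2)[of z] by linarith
    qed
    then obtain Y' where Y': "Y' \<subseteq> X'" "card X' \<le> d * card Y'"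
        "\<forall>x\<in>Y'. \<forall>y\<in>Y'. x \<noteq> y \<longrightarrow> y \<notin> C x"
      using less.hyps[OF smaller fin] by blast
    have "x \<notin> Y'" "finite Y'"
      using Y'(1) self[of x] fin finite_subset unfolding X'_def by auto
    moreover have "card X \<le> card X' + card (C x \<inter> X)"
    proof -
      have "card X = card (X' \<union> (C x \<inter> X))"
        by (rule arg_cong[where f = card]) (auto simp: X'_def)
      then show ?thesis
        using card_Un_le[of X' "C x \<inter> X"] by simp
    qed
    ultimately have "card X \<le> d * card (insert x Y')"
      using Y'(2) less.prems(2)[of x] by simp
    moreover have "\<forall>a\<in>insert x Y'. \<forall>b\<in>insert x Y'. a \<noteq> b \<longrightarrow> b \<notin> C a"
      using Y' sym unfolding X'_def by blast
    moreover have "insert x Y' \<subseteq> X"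
      using x Y'(1) unfolding X'_def by auto
    ultimately show ?thesis
      by blast
  qed auto
qed

lemma kfactor_neighbour_choice:
  assumes H: "is_kfactor n k H" and k: "1 \<le> k"
  obtains m where "\<And>x. x < n \<Longrightarrow> {x, m x} \<in> H"
proof -
  have "\<exists>b. {x, b} \<in> H" if "x < n" for x
  proof -
    have "nbrs H x \<noteq> {}"
      using kfactor_nbrs(3)[OF H that] k by auto
    then show ?thesis
      by (auto simp: nbrs_def)
  qed
  then show ?thesis
    using that by metis
qed

lemma kfactor_far_set_exists:
  assumes H: "is_kfactor n k H"
  obtains V where "V \<subseteq> {..<n}" "n \<le> (k + 1) ^ 3 * card V"
    "\<And>x y. x \<in> V \<Longrightarrow> y \<in> V \<Longrightarrow> x \<noteq> y \<Longrightarrow> y \<notin> ball3 H x"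
proof -
  have local_bound: "card (ball3 H x \<inter> {..<n}) \<le> (k + 1) ^ 3" for x
    using kfactor_ball3[OF H, of x] card_mono[of "ball3 H x" "ball3 H x \<inter> {..<n}"]
    by (meson Int_lower1 order_trans)
  have "\<exists>V\<subseteq>{..<n}. card {..<n} \<le> (k + 1) ^ 3 * card V \<and>
      (\<forall>x\<in>V. \<forall>y\<in>V. x \<noteq> y \<longrightarrow> y \<notin> ball3 H x)"
  proof (rule greedy_independent_subset)
    show "\<And>x y. y \<in> ball3 H x \<Longrightarrow> x \<in> ball3 H y"
      by (rule ball3_sym)
    show "\<And>x. card (ball3 H x \<inter> {..<n}) \<le> (k + 1) ^ 3"
      by (rule local_bound)
  qed (simp_all add: self_in_ball3)
  then show ?thesis
    using that by auto
qed

lemma far_apart_switch: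
  assumes H: "is_kfactor n k H" and far: "y \<notin> ball3 H x" and xa: "{x, a} \<in> H" and yb: "{y, b} \<in> H"
  obtains H' where "is_kfactor n k H'" "H' \<noteq> H" "{{x, y}, {a, b}} \<subseteq> H'" "H' \<subseteq> {{x, y}, {a, b}} \<union> H"
    "card {{x, y}, {a, b}} = 2"
proof -
  have "x \<noteq> y"
    using far self_in_ball3 by metis
  moreover have "{x, y} \<notin> H" "x \<noteq> b" "a \<noteq> y"
    using far ball3I(1)[of x y H] xa yb by (auto simp: insert_commute)
  moreover have "a \<noteq> b" "{a, b} \<notin> H"
    using far ball3I(2)[OF xa, of y] ball3I(3)[OF xa, of b y] yb by (auto simp: insert_commute)
  moreover have "x \<noteq> a"
    using kfactor_edge_vertices[OF H xa] by simp
  ultimately show ?thesis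
    using switch_kfactor[OF H xa yb] by (intro that[of "H - {{x, a}, {y, b}} \<union> {{x, y}, {a, b}}"])
      (auto simp: doubleton_eq_iff)
qed

lemma far_apart_mates:
  assumes H: "is_kfactor n k H"
    and far: "\<And>x y. x \<in> V \<Longrightarrow> y \<in> V \<Longrightarrow> x \<noteq> y \<Longrightarrow> y \<notin> ball3 H x"
    and mate: "\<And>x. x \<in> V \<Longrightarrow> {x, m x} \<in> H"
  shows "inj_on m V" and "\<And>x. x \<in> V \<Longrightarrow> m x \<notin> V"
proof -
  show "inj_on m V"
  proof (rule inj_onI)
    fix x y assume xy: "x \<in> V" "y \<in> V" "m x = m y"
    then have "{m x, y} \<in> H"
      using mate[of y] by (simp add: insert_commute)
    then have "y \<in> ball3 H x"
      using ball3I(2)[OF mate[OF xy(1)]] by blast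
    then show "x = y"
      using far[OF xy(1,2)] by blast
  qed
  show "m x \<notin> V" if x: "x \<in> V" for x
  proof
    assume mx: "m x \<in> V"
    have "m x \<noteq> x"
      using kfactor_edge_vertices[OF H mate[OF x]] by simp
    then have "m x \<notin> ball3 H x"
      using far[OF x mx] by simp
    then show False
      using ball3I(1)[OF mate[OF x]] by contradiction
  qed
qed

lemma switch_pairs_disjoint:
  fixes m :: "'a::linorder \<Rightarrow> 'a"
  assumes m: "inj_on m V" "\<And>v. v \<in> V \<Longrightarrow> m v \<notin> V"
    and q: "x \<in> V" "y \<in> V" "x < y" and q': "x' \<in> V" "y' \<in> V" "x' < y'" and ne: "(x, y) \<noteq> (x', y')"
  shows "{{x, y}, {m x, m y}} \<inter> {{x', y'}, {m x', m y'}} = {}"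
proof -
  have "{x, y} \<noteq> {x', y'}"
    using q q' ne by (auto simp: doubleton_eq_iff)
  moreover have "{m x, m y} \<noteq> {m x', m y'}"
    using \<open>{x, y} \<noteq> {x', y'}\<close> q q' inj_onD[OF m(1)] by (auto simp: doubleton_eq_iff)
  moreover have "{x, y} \<noteq> {m x', m y'}" "{m x, m y} \<noteq> {x', y'}"
    using q q' m(2) by (auto simp: doubleton_eq_iff)
  ultimately show ?thesis
    by auto
qed

lemma card_ordered_pairs:
  fixes V :: "'a::linorder set"
  assumes "finite V"
  shows "2 * card {(x, y). x \<in> V \<and> y \<in> V \<and> x < y} + card V = card V * card V"
proof -
  define P where "P = {(x, y). x \<in> V \<and> y \<in> V \<and> x < y}"
  have "V \<times> V = P \<union> prod.swap ` P \<union> (\<lambda>x. (x, x)) ` V"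
    by (auto simp: P_def)
  moreover have "finite P"
    by (rule finite_subset[of P "V \<times> V"]) (use assms in \<open>auto simp: P_def\<close>)
  moreover have "card (prod.swap ` P) = card P" "card ((\<lambda>x. (x, x)) ` V) = card V"
    by (auto intro!: card_image simp: inj_on_def)
  moreover have "P \<inter> prod.swap ` P = {}" "(P \<union> prod.swap ` P) \<inter> (\<lambda>x. (x, x)) ` V = {}"
    by (auto simp: P_def)
  ultimately have "card (V \<times> V) = card P + card P + card V"
    using assms by (simp add: card_Un_disjoint)
  then show ?thesis
    by (simp add: P_def card_cartesian_product)
qed

section \<open>Dense regime\<close>

lemma far_set_pairs_card:
  fixes V :: "nat set"
  assumes "finite V" "n \<le> K * card V" "2 * K \<le> n" "0 < K"
  shows "real n ^ 2 / (4 * real K ^ 2) \<le> real (card {(x, y). x \<in> V \<and> y \<in> V \<and> x < y})"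
proof -
  define r where "r = real (card V)"
  have "2 * K \<le> K * card V"
    using assms(2,3) by linarith
  then have "2 \<le> r"
    using assms(4) by (simp add: r_def)
  have "real n \<le> real (K * card V)"
    using assms(2) by (simp only: of_nat_le_iff)
  then have "real n \<le> real K * r"
    by (simp add: r_def)
  then have "real n ^ 2 \<le> (real K * r) ^ 2"
    by (intro power_mono) auto
  then have "real n ^ 2 / (4 * real K ^ 2) \<le> r ^ 2 / 4"
    using assms(4) by (simp add: field_simps)
  also have "\<dots> \<le> (r * r - r) / 2"
    using \<open>2 \<le> r\<close> mult_right_mono[of 2 r r] by (simp add: power2_eq_square field_simps)
  also have "\<dots> = real (card {(x, y). x \<in> V \<and> y \<in> V \<and> x < y})"
    using arg_cong[OF card_ordered_pairs[OF assms(1)], of real] by (simp add: r_def)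
  finally show ?thesis .
qed

lemma other_factor_prob_ge_switch_events:
  assumes p: "0 \<le> p" "p \<le> 1"
    and switch: "\<And>q. q \<in> P \<Longrightarrow> \<exists>H'. is_kfactor n k H' \<and> H' \<noteq> H \<and> H' \<subseteq> A q \<union> H"
  shows "gnp_prob n p (\<lambda>S. \<exists>q\<in>P. A q \<subseteq> S) \<le> other_factor_prob n k p H"
  unfolding other_factor_prob_def
proof (rule gnp_prob_mono[OF p])
  fix S assume "\<exists>q\<in>P. A q \<subseteq> S"
  then obtain q where q: "q \<in> P" "A q \<subseteq> S"
    by blast
  obtain H' where "is_kfactor n k H'" "H' \<noteq> H" "H' \<subseteq> A q \<union> H"
    using switch[OF q(1)] by blast
  then show "\<exists>H'. is_kfactor n k H' \<and> H' \<noteq> H \<and> H' \<subseteq> S \<union> H"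
    using q(2) by blast
qed

lemma other_factor_prob_ge_far_pairs:
  assumes H: "is_kfactor n k H" and p: "0 < p" "p \<le> 1" and V: "finite V"
    and far: "\<And>x y. x \<in> V \<Longrightarrow> y \<in> V \<Longrightarrow> x \<noteq> y \<Longrightarrow> y \<notin> ball3 H x"
    and mate: "\<And>x. x \<in> V \<Longrightarrow> {x, m x} \<in> H"
  shows "min (real (card {(x, y). x \<in> V \<and> y \<in> V \<and> x < y}) * p ^ 2) (1 / 2) / 2
    \<le> other_factor_prob n k p H"
proof -
  define P where "P = {(x, y). x \<in> V \<and> y \<in> V \<and> x < y}"
  define A where "A q = {{fst q, snd q}, {m (fst q), m (snd q)}}" for q
  have switch: "A q \<subseteq> vpairs n \<and> card (A q) = 2 \<and> (\<exists>H'. is_kfactor n k H' \<and> H' \<noteq> H \<and> H' \<subseteq> A q \<union> H)"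
    if "q \<in> P" for q
  proof -
    obtain x y where q: "q = (x, y)" "x \<in> V" "y \<in> V" "x \<noteq> y"
      using \<open>q \<in> P\<close> by (auto simp: P_def)
    obtain H' where "is_kfactor n k H'" "H' \<noteq> H" "A q \<subseteq> H'" "H' \<subseteq> A q \<union> H" "card (A q) = 2"
      using far_apart_switch[OF H far[OF q(2,3,4)] mate[OF q(2)] mate[OF q(3)]] unfolding A_def q by auto
    then show ?thesis
      by (auto simp: is_kfactor_def)
  qed
  have "finite P"
    by (rule finite_subset[of P "V \<times> V"]) (use V in \<open>auto simp: P_def\<close>)
  then have "min (real (card P) * p ^ 2) (1 / 2) / 2 \<le> gnp_prob n p (\<lambda>S. \<exists>q\<in>P. A q \<subseteq> S)"
  proof (rule gnp_prob_ex_disjoint_ge_min[OF _ p])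
    show "\<And>q. q \<in> P \<Longrightarrow> A q \<subseteq> vpairs n \<and> card (A q) = 2"
      using switch by simp
    note mates = far_apart_mates[where V = V and m = m, OF H far mate]
    show "A q \<inter> A q' = {}" if "q \<in> P" "q' \<in> P" "q \<noteq> q'" for q q'
    proof -
      obtain x y x' y' where "q = (x, y)" "q' = (x', y')"
        by fastforce
      then show ?thesis
        using that switch_pairs_disjoint[OF mates, of x y x' y'] by (simp add: A_def P_def)
    qed
  qed
  also have "\<dots> \<le> other_factor_prob n k p H"
    using p switch by (intro other_factor_prob_ge_switch_events) auto
  finally show ?thesis
    unfolding P_def .
qed

lemma other_factor_prob_ge:
  assumes H: "is_kfactor n k H" and k: "1 \<le> k" and p: "0 < p" "p \<le> 1"
    and n: "2 * (k + 1) ^ 3 \<le> n"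
  shows "min (real n ^ 2 * p ^ 2 / (4 * real ((k + 1) ^ 3) ^ 2)) (1 / 2) / 2 \<le> other_factor_prob n k p H"
proof -
  define K where "K = (k + 1) ^ 3"
  obtain V where V: "V \<subseteq> {..<n}" "n \<le> K * card V"
    and far: "\<And>x y. x \<in> V \<Longrightarrow> y \<in> V \<Longrightarrow> x \<noteq> y \<Longrightarrow> y \<notin> ball3 H x"
    using kfactor_far_set_exists[OF H] unfolding K_def by blast
  obtain m where mate: "\<And>x. x < n \<Longrightarrow> {x, m x} \<in> H"
    using kfactor_neighbour_choice[OF H k] by blast
  have "finite V"
    using V(1) finite_subset by blast
  define P where "P = {(x, y). x \<in> V \<and> y \<in> V \<and> x < y}"
  have "real n ^ 2 / (4 * real K ^ 2) \<le> real (card P)"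
    unfolding P_def using n by (intro far_set_pairs_card[OF \<open>finite V\<close> V(2)]) (simp_all add: K_def)
  then have "real n ^ 2 * p ^ 2 / (4 * real K ^ 2) \<le> real (card P) * p ^ 2"
    using mult_right_mono[of _ _ "p ^ 2"] by fastforce
  then have "min (real n ^ 2 * p ^ 2 / (4 * real K ^ 2)) (1 / 2) / 2 \<le> min (real (card P) * p ^ 2) (1 / 2) / 2"
    by (intro divide_right_mono min.mono) simp_all
  also have "\<dots> \<le> other_factor_prob n k p H"
    unfolding P_def using V(1) by (intro other_factor_prob_ge_far_pairs[OF H p \<open>finite V\<close> far]) (auto intro: mate)
  finally show ?thesis
    unfolding K_def .
qed

lemma other_factor_prob_bounded_below:
  assumes k: "1 \<le> k" and lam: "\<And>n. lam n \<le> real n"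
    and c0: "0 < c0" "\<forall>\<^sub>F n in sequentially. c0 \<le> lam n"
  shows "\<exists>c>0. \<exists>N. \<forall>n\<ge>N. \<forall>H. is_kfactor n k H \<longrightarrow> c \<le> other_factor_prob n k (lam n / real n) H"
proof -
  define K where "K = (k + 1) ^ 3"
  define c where "c = min (c0 ^ 2 / (4 * real K ^ 2)) (1 / 2) / 2"
  obtain N where N: "\<And>n. N \<le> n \<Longrightarrow> c0 \<le> lam n"
    using c0(2) unfolding eventually_sequentially by blast
  have "c \<le> other_factor_prob n k (lam n / real n) H"
    if n: "max N (2 * K) \<le> n" and H: "is_kfactor n k H" for n H
  proof -
    have lam_ge: "c0 \<le> lam n"
      using N n by simp
    then have "0 < real n"
      using c0(1) lam[of n] by linarith
    then have p: "0 < lam n / real n" "lam n / real n \<le> 1"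
      and sq: "real n ^ 2 * (lam n / real n) ^ 2 = lam n ^ 2"
      using lam_ge c0(1) lam[of n] by (auto simp: field_simps)
    have "c0 ^ 2 \<le> lam n ^ 2"
      using lam_ge c0(1) by (intro power_mono) auto
    then have "c \<le> min (real n ^ 2 * (lam n / real n) ^ 2 / (4 * real K ^ 2)) (1 / 2) / 2"
      unfolding c_def sq by (intro divide_right_mono min.mono) auto
    also have "\<dots> \<le> other_factor_prob n k (lam n / real n) H"
      unfolding K_def using n by (intro other_factor_prob_ge H k p) (simp add: K_def)
    finally show ?thesis .
  qed
  moreover have "0 < c"
    using c0(1) by (simp add: c_def K_def)
  ultimately show ?thesis
    by blast
qed

theorem mainTheorem2:
  fixes k :: nat and lam :: "nat \<Rightarrow> real"
  assumes "k \<ge> 1"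
    and "\<And>n. 0 \<le> lam n \<and> lam n \<le> real n"
  shows "(lam \<longlonglongrightarrow> 0 \<longrightarrow>
            (\<forall>\<epsilon>>0. \<exists>N. \<forall>n\<ge>N. \<forall>H. even (k * n) \<and> is_kfactor n k H \<longrightarrow>
               other_factor_prob n k (lam n / real n) H \<le> \<epsilon>))
       \<and> ((\<exists>c0>0. \<forall>\<^sub>F n in sequentially. lam n \<ge> c0) \<longrightarrow>
            (\<exists>c>0. \<exists>N. \<forall>n\<ge>N. \<forall>H. even (k * n) \<and> is_kfactor n k H \<longrightarrow>
               other_factor_prob n k (lam n / real n) H \<ge> c))"
proof (intro conjI impI allI)
  show "\<exists>N. \<forall>n\<ge>N. \<forall>H. even (k * n) \<and> is_kfactor n k H \<longrightarrow> other_factor_prob n k (lam n / real n) H \<le> \<epsilon>"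
    if "lam \<longlonglongrightarrow> 0" "0 < \<epsilon>" for \<epsilon>
    using other_factor_prob_tendsto_zero[OF that(1) assms(2) that(2)] by blast
  show "\<exists>c>0. \<exists>N. \<forall>n\<ge>N. \<forall>H. even (k * n) \<and> is_kfactor n k H \<longrightarrow> c \<le> other_factor_prob n k (lam n / real n) H"
    if "\<exists>c0>0. \<forall>\<^sub>F n in sequentially. c0 \<le> lam n"
    using that other_factor_prob_bounded_below[OF assms(1)] assms(2) by blast
qed

end
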